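(* In the setting of the context, consider a Case 2 spacetime ($\partial_v r_->0$). Radially outgoing null geodesics whose initial position is on or inside the inner AH never intersect the inner AH at any later time, hence stay inside the inner AH, and they satisfy $x(v)\to0$ as $v\to\infty$.
   Context: Spherically symmetric spacetime $ds^2=-f(v,r)A(v,r)^2dv^2+2A(v,r)\,dr\,dv+r^2d\Omega^2$ with $A>0$, $f,A\to1$ as $r\to\infty$, $f(v,0)=1$, $\partial_rf(v,0)=\partial_rA(v,0)=0$; $f(v,\cdot)$ has exactly two zeros $r_+(v)>r_-(v)$ (outer/inner apparent horizons, AHs), $f=F(r-r_+)(r-r_-)$ with $F>0$, and $h=AF>0$. Assumptions: $\partial_v r_+<0$; $r_\pm(v)\to r_c$ as $v\to\infty$; the sign of $\partial_v r_-$ is constant; the $v\to\infty$ limits of $A,F,h$ behave as analytic functions of $r$, so all $\partial_r^n h$ converge as $v\to\infty$. With $x=r-r_c$, $x_\pm=r_\pm-r_c$ and $h$ regarded as a function of $(v,x)$, radially outgoing null geodesics solve $dx/dv=\tfrac12h(v,x)(x-x_+(v))(x-x_-(v))$. *)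

theory Defs
  imports "HOL-Analysis.Analysis"
begin

end

theory Submission
  imports Defs
begin

text \<open>
  At a time where the geodesic meets the inner horizon its velocity vanishes, while the
  horizon moves outward; so the geodesic can only cross the inner horizon downward, and
  having started on or below it, it stays strictly below. Below both horizons its velocity
  is nonnegative, so it increases, and it is bounded above by the inner horizon, which
  tends to 0. If it stayed below a level \<open>a < 0\<close>, it would stay in a compact interval on
  which \<open>h\<close> is eventually bounded away from 0, while both horizons eventually lie above
  \<open>a/2\<close>; its velocity would then be bounded below by a positive constant, which forces it
  past \<open>a\<close>.
\<close>

lemma DERIV_within_atLeast_imp_DERIV_at:
  fixes f :: "real \<Rightarrow> real"
  assumes "(f has_real_derivative D) (at t within {a..})" "a < t"
  shows "(f has_real_derivative D) (at t)"
proof -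
  have "(f has_real_derivative D) (at t within {a<..})"
    using assms(1) by (rule has_field_derivative_subset) auto
  moreover have "at t within {a<..} = at t"
    using assms(2) by (intro at_within_open) auto
  ultimately show ?thesis by simp
qed

lemma downcrossing_zeros_imp_nonpos:
  fixes g g' :: "real \<Rightarrow> real"
  assumes deriv: "\<And>t. a \<le> t \<Longrightarrow> (g has_real_derivative g' t) (at t within {a..})"
    and down: "\<And>t. a \<le> t \<Longrightarrow> g t = 0 \<Longrightarrow> g' t < 0"
    and start: "g a \<le> 0"
    and "a \<le> b"
  shows "g b \<le> 0"
proof (rule ccontr)
  assume "\<not> g b \<le> 0"
  then have gb: "0 < g b" by simp
  have "continuous_on {a..} g"
    unfolding continuous_on_eq_continuous_within using deriv DERIV_continuous by blast
  then have cont: "continuous_on {a..b} g"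
    by (rule continuous_on_subset) auto
  define Z where "Z = {t \<in> {a..b}. g t = 0}"
  have "closed Z"
    unfolding Z_def by (rule continuous_closed_preimage_constant[OF cont]) auto
  moreover have "Z \<noteq> {}"
    using IVT'[of g a 0 b, OF start less_imp_le[OF gb] \<open>a \<le> b\<close> cont] unfolding Z_def by auto
  moreover have Z_bdd: "bdd_above Z"
    unfolding Z_def by (rule bdd_aboveI[of _ b]) auto
  ultimately have "Sup Z \<in> Z"
    by (rule closed_contains_Sup[rotated 2])
  then obtain s where s: "s = Sup Z" "a \<le> s" "s \<le> b" "g s = 0"
    unfolding Z_def by auto
  with gb have "s < b"
    by (cases "s = b") auto
  text \<open>Just after the last zero \<open>s\<close> before \<open>b\<close>, \<open>g\<close> is negative; by the IVT it has another zero in \<open>(s, b]\<close>.\<close>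
  obtain d where d: "0 < d" "\<And>k. 0 < k \<Longrightarrow> s + k \<in> {a..} \<Longrightarrow> k < d \<Longrightarrow> g (s + k) < g s"
    using has_real_derivative_neg_dec_right[OF deriv[OF s(2)] down[OF s(2,4)]] by blast
  define k where "k = min (d / 2) ((b - s) / 2)"
  have k: "0 < k" "k < d" "s + k < b"
    using d(1) \<open>s < b\<close> unfolding k_def by (auto simp: min_def field_simps)
  have "g (s + k) < 0"
    using d(2)[OF k(1) _ k(2)] s k(1) by auto
  moreover have "continuous_on {s + k..b} g"
    using cont by (rule continuous_on_subset) (use s k in auto)
  ultimately obtain z where z: "s + k \<le> z" "z \<le> b" "g z = 0"
    using IVT'[of g "s + k" 0 b] gb k by auto
  then have "z \<in> Z"
    unfolding Z_def using s k by auto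
  then have "z \<le> s"
    unfolding s(1) using Z_bdd by (rule cSup_upper)
  then show False
    using z k by simp
qed

lemma downcrossing_zeros_imp_neg:
  fixes g g' :: "real \<Rightarrow> real"
  assumes deriv: "\<And>t. a \<le> t \<Longrightarrow> (g has_real_derivative g' t) (at t within {a..})"
    and down: "\<And>t. a \<le> t \<Longrightarrow> g t = 0 \<Longrightarrow> g' t < 0"
    and start: "g a \<le> 0"
    and "a < b"
  shows "g b < 0"
proof (rule ccontr)
  have nonpos: "g c \<le> 0" if "a \<le> c" for c
    by (rule downcrossing_zeros_imp_nonpos[of a g g' c]) (simp_all add: deriv down start that)
  have "a \<le> b"
    using \<open>a < b\<close> by simp
  assume "\<not> g b < 0"
  with nonpos[OF \<open>a \<le> b\<close>] have gb: "g b = 0"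
    by simp
  text \<open>Just before the zero \<open>b\<close>, \<open>g\<close> would be positive.\<close>
  obtain d where d: "0 < d" "\<And>k. 0 < k \<Longrightarrow> b - k \<in> {a..} \<Longrightarrow> k < d \<Longrightarrow> g b < g (b - k)"
    using has_real_derivative_neg_dec_left[OF deriv[OF \<open>a \<le> b\<close>] down[OF \<open>a \<le> b\<close> gb]]
    by auto
  define k where "k = min (d / 2) ((b - a) / 2)"
  have k: "0 < k" "k < d" "a < b - k"
    using d(1) \<open>a < b\<close> unfolding k_def by (auto simp: min_def field_simps)
  have "g b < g (b - k)"
    using k by (intro d(2)) auto
  moreover have "g (b - k) \<le> 0"
    using k(3) by (intro nonpos) simp
  ultimately show False
    using gb by simp
qed

lemma DERIV_ge_imp_linear_growth:
  fixes f f' :: "real \<Rightarrow> real"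
  assumes "a \<le> b" "continuous_on {a..b} f"
    and "\<And>t. a < t \<Longrightarrow> t < b \<Longrightarrow> (f has_real_derivative f' t) (at t)"
    and "\<And>t. a < t \<Longrightarrow> t < b \<Longrightarrow> c \<le> f' t"
  shows "f a + c * (b - a) \<le> f b"
proof -
  have "f a - c * a \<le> f b - c * b"
  proof (rule DERIV_nonneg_imp_increasing_open[OF assms(1)])
    show "continuous_on {a..b} (\<lambda>t. f t - c * t)"
      using assms(2) by (intro continuous_intros)
    fix t assume "a < t" "t < b"
    then show "\<exists>y. ((\<lambda>t. f t - c * t) has_real_derivative y) (at t) \<and> 0 \<le> y"
      using assms(3,4) by (intro exI[of _ "f' t - c"]) (auto intro!: derivative_eq_intros)
  qed
  then show ?thesis
    by (simp add: algebra_simps)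
qed

lemma uniform_limit_pos_eventually_bounded_below:
  fixes h :: "'a \<Rightarrow> 'b::topological_space \<Rightarrow> real"
  assumes "compact K" "continuous_on K hinf" "\<And>y. y \<in> K \<Longrightarrow> 0 < hinf y"
    and "uniform_limit K h hinf F"
  shows "\<exists>c>0. \<forall>\<^sub>F v in F. \<forall>y\<in>K. c \<le> h v y"
proof (cases "K = {}")
  case True
  then show ?thesis by (intro exI[of _ 1]) auto
next
  case False
  then obtain y0 where y0: "y0 \<in> K" "\<And>y. y \<in> K \<Longrightarrow> hinf y0 \<le> hinf y"
    using continuous_attains_inf[OF assms(1) False assms(2)] by blast
  define c where "c = hinf y0 / 2"
  have "0 < c"
    using assms(3)[OF y0(1)] unfolding c_def by simp
  moreover have "\<forall>\<^sub>F v in F. \<forall>y\<in>K. c \<le> h v y"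
    using uniform_limitD[OF assms(4) \<open>0 < c\<close>]
  proof eventually_elim
    case (elim v)
    show ?case
    proof
      fix y assume "y \<in> K"
      with elim have "\<bar>h v y - hinf y\<bar> < c"
        by (simp add: dist_real_def)
      with y0(2)[OF \<open>y \<in> K\<close>] show "c \<le> h v y"
        unfolding c_def by linarith
    qed
  qed
  ultimately show ?thesis by blast
qed

lemma nondecreasing_eventually_exceeds:
  fixes x x' :: "real \<Rightarrow> real"
  assumes cont: "continuous_on {v0..} x"
    and deriv: "\<And>t. v0 < t \<Longrightarrow> (x has_real_derivative x' t) (at t)"
    and nonneg: "\<And>t. v0 < t \<Longrightarrow> 0 \<le> x' t"
    and push: "(\<And>v. v0 \<le> v \<Longrightarrow> x v \<in> {x v0..a}) \<Longrightarrow> \<exists>\<delta>>0. \<forall>\<^sub>F v in at_top. \<delta> \<le> x' v"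
  shows "\<forall>\<^sub>F v in at_top. a < x v"
proof -
  have growth: "x s + c * (t - s) \<le> x t"
    if "v0 \<le> s" "s \<le> t" "\<And>u. s < u \<Longrightarrow> u < t \<Longrightarrow> c \<le> x' u" for s t c
    using that
    by (intro DERIV_ge_imp_linear_growth[where f' = x'] continuous_on_subset[OF cont] deriv) auto
  have x_mono: "x s \<le> x t" if "v0 \<le> s" "s \<le> t" for s t
    using growth[of s t 0] that nonneg by simp
  show ?thesis
  proof (cases "\<exists>w\<ge>v0. a < x w")
    case True
    then obtain w where w: "v0 \<le> w" "a < x w" by blast
    show ?thesis
      using eventually_ge_at_top[of w]
      by eventually_elim (use x_mono[of w] w in fastforce)
  next
    case False
    then have below: "x v \<in> {x v0..a}" if "v0 \<le> v" for v
      using x_mono[of v0 v] that by auto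
    then obtain \<delta> where "0 < \<delta>" "\<forall>\<^sub>F v in at_top. \<delta> \<le> x' v"
      using push by blast
    then obtain V where V: "v0 \<le> V" "\<And>v. V \<le> v \<Longrightarrow> \<delta> \<le> x' v"
      by (metis eventually_at_top_linorder max.cobounded1 max.boundedE)
    define w where "w = V + (a - x V) / \<delta> + 1"
    have "x V \<le> a"
      using below[OF V(1)] by simp
    then have "V \<le> w"
      unfolding w_def using \<open>0 < \<delta>\<close> by simp
    then have "x V + \<delta> * (w - V) \<le> x w"
      using V by (intro growth) auto
    moreover have "\<delta> * (w - V) = a - x V + \<delta>"
      unfolding w_def using \<open>0 < \<delta>\<close> by (simp add: field_simps)
    moreover have "x w \<le> a"
      using below[of w] V(1) \<open>V \<le> w\<close> by simp
    ultimately show ?thesis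
      using \<open>0 < \<delta>\<close> by simp
  qed
qed

lemma velocity_eventually_bounded_below:
  fixes h :: "real \<Rightarrow> real \<Rightarrow> real" and hinf xp xm x :: "real \<Rightarrow> real"
  assumes "compact K" "continuous_on K hinf" "\<And>y. y \<in> K \<Longrightarrow> 0 < hinf y"
    and "uniform_limit K h hinf at_top"
    and xp_lim: "(xp \<longlongrightarrow> 0) at_top" and xm_lim: "(xm \<longlongrightarrow> 0) at_top"
    and "a < 0" and x_in_K: "\<And>v. v0 \<le> v \<Longrightarrow> x v \<in> K" and x_below: "\<And>v. v0 \<le> v \<Longrightarrow> x v \<le> a"
  shows "\<exists>\<delta>>0. \<forall>\<^sub>F v in at_top. \<delta> \<le> (1/2) * h v (x v) * (x v - xp v) * (x v - xm v)"
proof -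
  obtain c where c: "0 < c" "\<forall>\<^sub>F v in at_top. \<forall>y\<in>K. c \<le> h v y"
    using uniform_limit_pos_eventually_bounded_below[OF assms(1-4)] by blast
  have "a/2 < 0"
    using \<open>a < 0\<close> by simp
  have "\<forall>\<^sub>F v in at_top. (1/2) * c * (a/2)^2 \<le> (1/2) * h v (x v) * (x v - xp v) * (x v - xm v)"
    using c(2) order_tendstoD(1)[OF xp_lim \<open>a/2 < 0\<close>] order_tendstoD(1)[OF xm_lim \<open>a/2 < 0\<close>]
      eventually_ge_at_top[of v0]
  proof eventually_elim
    case (elim v)
    moreover have "x v \<le> a" "x v \<in> K"
      using elim(4) x_in_K x_below by auto
    ultimately have "c \<le> h v (x v)" "x v - xp v \<le> a/2" "x v - xm v \<le> a/2"
      by auto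
    moreover from this have "(a/2)^2 \<le> (x v - xp v) * (x v - xm v)"
      using mult_mono[of "-(a/2)" "xp v - x v" "-(a/2)" "xm v - x v"] \<open>a < 0\<close>
      by (simp add: power2_eq_square algebra_simps)
    ultimately have "c * (a/2)^2 \<le> h v (x v) * ((x v - xp v) * (x v - xm v))"
      using c(1) by (intro mult_mono) auto
    then show ?case
      by (simp add: mult.assoc)
  qed
  then show ?thesis
    using c(1) \<open>a < 0\<close> by (intro exI[of _ "(1/2) * c * (a/2)^2"]) auto
qed

theorem lemma4:
  fixes h :: "real \<Rightarrow> real \<Rightarrow> real"
    and hinf :: "real \<Rightarrow> real"
    and xp xm xp' xm' :: "real \<Rightarrow> real"
    and x :: "real \<Rightarrow> real"
    and v0 :: real
  assumes h_cont: "continuous_on UNIV (\<lambda>(v, y). h v y)"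
    and h_pos: "\<And>v y. h v y > 0"
    and h_lim: "\<And>K. compact K \<Longrightarrow> uniform_limit K (\<lambda>v y. h v y) hinf at_top"
    and hinf_cont: "continuous_on UNIV hinf"
    and hinf_pos: "\<And>y. hinf y > 0"
    and xp_deriv: "\<And>v. (xp has_real_derivative xp' v) (at v)"
    and xm_deriv: "\<And>v. (xm has_real_derivative xm' v) (at v)"
    and xp_decr: "\<And>v. xp' v < 0"
    and case2: "\<And>v. xm' v > 0"
    and order: "\<And>v. xm v < xp v"
    and xp_lim: "(xp \<longlongrightarrow> 0) at_top"
    and xm_lim: "(xm \<longlongrightarrow> 0) at_top"
    and geod: "\<And>v. v \<ge> v0 \<Longrightarrow>
       (x has_real_derivative (1/2) * h v (x v) * (x v - xp v) * (x v - xm v)) (at v within {v0..})"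
    and init: "x v0 \<le> xm v0"
  shows "(\<forall>v>v0. x v < xm v) \<and> (x \<longlongrightarrow> 0) at_top"
proof -
  define G where "G v = (1/2) * h v (x v) * (x v - xp v) * (x v - xm v)" for v
  have x_deriv: "(x has_real_derivative G t) (at t)" if "v0 < t" for t
    using DERIV_within_atLeast_imp_DERIV_at[OF geod that] that unfolding G_def by simp
  have x_cont: "continuous_on {v0..} x"
    unfolding continuous_on_eq_continuous_within using geod DERIV_continuous by blast
  have inside: "x v < xm v" if "v0 < v" for v
  proof -
    have "x v - xm v < 0"
    proof (rule downcrossing_zeros_imp_neg[of v0 "\<lambda>v. x v - xm v" "\<lambda>t. G t - xm' t"])
      show "((\<lambda>v. x v - xm v) has_real_derivative G t - xm' t) (at t within {v0..})" if "v0 \<le> t" for t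
        unfolding G_def by (intro DERIV_diff geod that has_field_derivative_at_within[OF xm_deriv])
      show "G t - xm' t < 0" if "x t - xm t = 0" for t
        using that case2[of t] unfolding G_def by simp
    qed (use init that in simp_all)
    then show ?thesis by simp
  qed
  have G_nonneg: "0 \<le> G t" if "v0 < t" for t
    using inside[OF that] order[of t] h_pos[of t "x t"] unfolding G_def
    by (simp add: mult_nonpos_nonpos mult.assoc)
  have "\<forall>\<^sub>F v in at_top. x v < a" if "0 < a" for a
    using order_tendstoD(2)[OF xm_lim that] eventually_gt_at_top[of v0]
    by eventually_elim (use inside in fastforce)
  moreover have "\<forall>\<^sub>F v in at_top. a < x v" if "a < 0" for a
  proof (rule nondecreasing_eventually_exceeds[OF x_cont x_deriv G_nonneg])
    assume "\<And>v. v0 \<le> v \<Longrightarrow> x v \<in> {x v0..a}"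
    then show "\<exists>\<delta>>0. \<forall>\<^sub>F v in at_top. \<delta> \<le> G v"
      unfolding G_def using that
      by (intro velocity_eventually_bounded_below[OF compact_Icc continuous_on_subset[OF hinf_cont]
            hinf_pos h_lim xp_lim xm_lim]) auto
  qed
  ultimately show ?thesis
    using inside by (blast intro: order_tendstoI)
qed

end
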